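(* Let $G=(L\cup R,E)$ be a $(c,d)$-regular bipartite graph with $L=[n]$, $C_0\subseteq\mathbb{F}_2^d$ a linear code of minimum distance $d_0$, $t=d_0/2$, $x\in\mathbb{F}_2^n$, $y\in T(G,C_0)$ and $F=\{i\in[n]:x_i\ne y_i\}$. Then the number of $i\in[n]\setminus F$ such that $p_i>0$ at the end of $\mathsf{RandFlip}(x)$ is at most $\frac ct|F|$. In particular, for $x'=\mathsf{RandFlip}(x)$, one always has $d_H(x',y)\le\left(1+\frac ct\right)d_H(x,y)$.
   Context: A bipartite graph is $(c,d)$-regular if left degrees are $c$ and right degrees $d$. Tanner code: $L=[n]$, for each $v\in R$ a fixed ordering of $N(v)$ defines $x_{N(v)}\in\mathbb{F}_2^d$, and $T(G,C_0)=\{x:x_{N(v)}\in C_0\ \forall v\in R\}$. $d_H$ is Hamming distance. $\mathsf{Decode}(z)$ for $z\in\mathbb{F}_2^d$ is the codeword of $C_0$ closest to $z$, ties broken lexicographically. $\mathsf{RandFlip}(x)$: set $t=d_0/2$ and $p_1=\dots=p_n=0$; for each $v\in R$, let $w_v=\mathsf{Decode}(x_{N(v)})$; if $1\le d_H(w_v,x_{N(v)})<t$, let $i$ be the smallest element of $N(v)$ at which $w_v$ and $x_{N(v)}$ differ and increase $p_i$ by $\frac{t-d_H(w_v,x_{N(v)})}{ct}$. Then flip each $x_i$ independently with probability $p_i$ and return the result. *)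

theory Defs
  imports "HOL-Probability.Probability"
begin

text \<open>Vectors in F_2^n are modelled as functions nat => bool, only indices < n matter.
  Local words in F_2^d (and the code C0) are bool lists of length d.
  The bipartite graph: left vertices L = {0..<n}, right vertices a finite set R,
  and N v is the fixed ordering of the neighbourhood of v (a distinct list).\<close>

definition hdist :: "nat \<Rightarrow> (nat \<Rightarrow> bool) \<Rightarrow> (nat \<Rightarrow> bool) \<Rightarrow> nat" where
  "hdist n x y = card {i \<in> {..<n}. x i \<noteq> y i}"

definition hdist_list :: "bool list \<Rightarrow> bool list \<Rightarrow> nat" where
  "hdist_list u w = card {j. j < length u \<and> u ! j \<noteq> w ! j}"

definition cd_regular ::
  "nat \<Rightarrow> 'r set \<Rightarrow> ('r \<Rightarrow> nat list) \<Rightarrow> nat \<Rightarrow> nat \<Rightarrow> bool" where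
  "cd_regular n R N c d \<longleftrightarrow> finite R \<and>
     (\<forall>v\<in>R. length (N v) = d \<and> distinct (N v) \<and> set (N v) \<subseteq> {..<n}) \<and>
     (\<forall>i<n. card {v \<in> R. i \<in> set (N v)} = c)"

definition linear_code :: "nat \<Rightarrow> bool list set \<Rightarrow> bool" where
  "linear_code d C0 \<longleftrightarrow> C0 \<subseteq> {w. length w = d} \<and> replicate d False \<in> C0 \<and>
     (\<forall>u\<in>C0. \<forall>w\<in>C0. map2 (\<noteq>) u w \<in> C0)"

definition min_distance :: "bool list set \<Rightarrow> nat \<Rightarrow> bool" where
  "min_distance C0 d0 \<longleftrightarrow>
     (\<exists>u\<in>C0. \<exists>w\<in>C0. u \<noteq> w \<and> hdist_list u w = d0) \<and>
     (\<forall>u\<in>C0. \<forall>w\<in>C0. u \<noteq> w \<longrightarrow> d0 \<le> hdist_list u w)"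

definition tanner :: "'r set \<Rightarrow> ('r \<Rightarrow> nat list) \<Rightarrow> bool list set \<Rightarrow> (nat \<Rightarrow> bool) set" where
  "tanner R N C0 = {x. \<forall>v\<in>R. map x (N v) \<in> C0}"

definition decode :: "bool list set \<Rightarrow> bool list \<Rightarrow> bool list" where
  "decode C0 z = (THE w. w \<in> C0 \<and> (\<forall>u\<in>C0. hdist_list w z < hdist_list u z \<or>
      (hdist_list w z = hdist_list u z \<and> lexordp_eq w u)))"

definition first_diff :: "nat list \<Rightarrow> bool list \<Rightarrow> bool list \<Rightarrow> nat" where
  "first_diff Nv w z = Min {Nv ! j | j. j < length Nv \<and> w ! j \<noteq> z ! j}"

text \<open>The value p_i at the end of RandFlip(x), with t = d0/2.\<close>
definition rf_prob ::
  "'r set \<Rightarrow> ('r \<Rightarrow> nat list) \<Rightarrow> bool list set \<Rightarrow> nat \<Rightarrow> nat \<Rightarrow> (nat \<Rightarrow> bool) \<Rightarrow> nat \<Rightarrow> real" where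
  "rf_prob R N C0 d0 c x i =
     (let t = real d0 / 2 in
      \<Sum>v \<in> {v \<in> R. let z = map x (N v); w = decode C0 z; e = hdist_list w z in
               1 \<le> e \<and> real e < t \<and> first_diff (N v) w z = i}.
         (t - real (hdist_list (decode C0 (map x (N v))) (map x (N v)))) / (real c * t))"

definition randflip ::
  "nat \<Rightarrow> 'r set \<Rightarrow> ('r \<Rightarrow> nat list) \<Rightarrow> bool list set \<Rightarrow> nat \<Rightarrow> nat \<Rightarrow> (nat \<Rightarrow> bool) \<Rightarrow> (nat \<Rightarrow> bool) pmf" where
  "randflip n R N C0 d0 c x =
     map_pmf (\<lambda>f i. x i \<noteq> f i)
       (Pi_pmf {..<n} False (\<lambda>i. bernoulli_pmf (rf_prob R N C0 d0 c x i)))"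

end

theory Submission
  imports Defs
begin

text \<open>Call a check v a nominator of i if RandFlip raises p_i because of v. If i is not
  in F = {i. x_i \<noteq> y_i}, the decoded word w_v disagrees with x, hence with y, at i, so w_v
  differs from the codeword y|N(v); by the triangle inequality v then sees more than
  d0 - t = t errors of x relative to y. A check nominates at most one coordinate, and by
  double counting (every coordinate lies in exactly c checks) at most c|F|/t checks see more
  than t errors. RandFlip only changes coordinates with p_i > 0, which gives the distance bound.\<close>

lemma finite_has_least_wrt_total_trans:
  assumes "finite S" "S \<noteq> {}"
    and total: "\<And>a b. r a b \<or> r b a"
    and trans: "\<And>a b c. r a b \<Longrightarrow> r b c \<Longrightarrow> r a c"
  shows "\<exists>b\<in>S. \<forall>u\<in>S. r b u"
  using assms(1,2)
proof (induction S rule: finite_ne_induct)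
  case (singleton a)
  show ?case using total[of a a] by auto
next
  case (insert a S)
  then obtain b where b: "b \<in> S" "\<forall>u\<in>S. r b u" by auto
  show ?case
  proof (cases "r a b")
    case True
    then show ?thesis using b total[of a a] trans by blast
  next
    case False
    then show ?thesis using b total[of a b] by blast
  qed
qed

lemma decode_in:
  assumes "finite C0" "C0 \<noteq> {}"
  shows "decode C0 z \<in> C0"
proof -
  define closer where
    "closer w u \<longleftrightarrow> hdist_list w z < hdist_list u z \<or>
       (hdist_list w z = hdist_list u z \<and> lexordp_eq w u)" for w u
  have closer_total: "closer w u \<or> closer u w" for w u
    using lexordp_eq_linear unfolding closer_def by auto
  have closer_trans: "closer u w \<Longrightarrow> closer w v \<Longrightarrow> closer u v" for u w v
    unfolding closer_def using lexordp_eq_trans by fastforce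
  have "\<exists>b\<in>C0. \<forall>u\<in>C0. closer b u"
    by (rule finite_has_least_wrt_total_trans) (use assms closer_total closer_trans in blast)+
  then obtain b where b: "b \<in> C0" "\<forall>u\<in>C0. closer b u" by blast
  have "decode C0 z = (THE w. w \<in> C0 \<and> (\<forall>u\<in>C0. closer w u))"
    unfolding decode_def closer_def ..
  also have "\<dots> = b"
  proof (rule the_equality)
    fix w assume w: "w \<in> C0 \<and> (\<forall>u\<in>C0. closer w u)"
    then have "closer w b" "closer b w" using b by auto
    then show "w = b" unfolding closer_def using lexordp_eq_antisym by auto
  qed (use b in blast)
  finally show ?thesis using b by simp
qed

lemma hdist_list_triangle:
  assumes "length u = length v" "length v = length w"
  shows "hdist_list u w \<le> hdist_list u v + hdist_list v w"
proof -
  have "{j. j < length u \<and> u ! j \<noteq> w ! j}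
      \<subseteq> {j. j < length u \<and> u ! j \<noteq> v ! j} \<union> {j. j < length v \<and> v ! j \<noteq> w ! j}"
    using assms by auto
  then have "hdist_list u w \<le> card ({j. j < length u \<and> u ! j \<noteq> v ! j} \<union>
      {j. j < length v \<and> v ! j \<noteq> w ! j})"
    unfolding hdist_list_def by (intro card_mono) auto
  also have "\<dots> \<le> hdist_list u v + hdist_list v w"
    unfolding hdist_list_def by (rule card_Un_le)
  finally show ?thesis .
qed

lemma hdist_list_eq_0_imp_eq:
  assumes "length u = length w" "hdist_list u w = 0"
  shows "u = w"
  using assms by (auto simp: hdist_list_def intro: nth_equalityI)

lemma hdist_list_map:
  assumes "distinct Nv"
  shows "hdist_list (map x Nv) (map y Nv) = card {i \<in> set Nv. x i \<noteq> y i}"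
proof -
  let ?J = "{j. j < length Nv \<and> x (Nv ! j) \<noteq> y (Nv ! j)}"
  have "{i \<in> set Nv. x i \<noteq> y i} = (!) Nv ` ?J"
    by (auto simp: in_set_conv_nth)
  moreover have "inj_on ((!) Nv) ?J"
    using assms by (auto simp: inj_on_def nth_eq_iff_index_eq)
  moreover have "{j. j < length (map x Nv) \<and> map x Nv ! j \<noteq> map y Nv ! j} = ?J"
    by auto
  ultimately show ?thesis
    unfolding hdist_list_def by (simp add: card_image)
qed

lemma min_distance_pos:
  assumes "C0 \<subseteq> {w. length w = d}" "min_distance C0 d0"
  shows "0 < d0"
proof -
  obtain u w where "u \<in> C0" "w \<in> C0" "u \<noteq> w" "hdist_list u w = d0"
    using assms(2) unfolding min_distance_def by blast
  then show ?thesis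
    using assms(1) hdist_list_eq_0_imp_eq[of u w] by (auto simp: gr0I)
qed

lemma first_diff_nth:
  assumes "length w = length Nv" "hdist_list w z \<noteq> 0"
  shows "\<exists>j<length Nv. w ! j \<noteq> z ! j \<and> first_diff Nv w z = Nv ! j"
proof -
  let ?D = "{Nv ! j | j. j < length Nv \<and> w ! j \<noteq> z ! j}"
  have "?D \<noteq> {}"
    using assms unfolding hdist_list_def by (auto simp: card_eq_0_iff)
  then have "Min ?D \<in> ?D" by (intro Min_in) auto
  then show ?thesis unfolding first_diff_def by auto
qed

definition decode_dist :: "bool list set \<Rightarrow> nat list \<Rightarrow> (nat \<Rightarrow> bool) \<Rightarrow> nat" where
  "decode_dist C0 Nv x = hdist_list (decode C0 (map x Nv)) (map x Nv)"

definition flip_candidate :: "bool list set \<Rightarrow> nat list \<Rightarrow> (nat \<Rightarrow> bool) \<Rightarrow> nat" where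
  "flip_candidate C0 Nv x = first_diff Nv (decode C0 (map x Nv)) (map x Nv)"

lemma rf_prob_pos_imp_nominated:
  assumes "0 < rf_prob R N C0 d0 c x i"
  shows "\<exists>v\<in>R. 1 \<le> decode_dist C0 (N v) x \<and> real (decode_dist C0 (N v) x) < real d0 / 2
           \<and> flip_candidate C0 (N v) x = i"
proof (rule ccontr)
  assume "\<not> ?thesis"
  then have "rf_prob R N C0 d0 c x i = 0"
    unfolding rf_prob_def Let_def decode_dist_def flip_candidate_def
    by (intro sum.neutral) auto
  then show False using assms by simp
qed

lemma nominated_correct_imp_many_errors:
  assumes code_len: "C0 \<subseteq> {w. length w = length Nv}"
    and "min_distance C0 d0"
    and y_local: "map y Nv \<in> C0"
    and "1 \<le> decode_dist C0 Nv x" "real (decode_dist C0 Nv x) < real d0 / 2"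
    and correct: "x (flip_candidate C0 Nv x) = y (flip_candidate C0 Nv x)"
  shows "real d0 / 2 < real (hdist_list (map x Nv) (map y Nv))"
proof -
  define z where "z = map x Nv"
  define w where "w = decode C0 z"
  have "finite {w :: bool list. set w \<subseteq> UNIV \<and> length w = length Nv}"
    by (rule finite_lists_length_eq) simp
  then have "finite C0" using code_len by (auto intro: finite_subset)
  then have w_in: "w \<in> C0" unfolding w_def using decode_in y_local by blast
  then have w_len: "length w = length Nv" using code_len by auto
  have "hdist_list w z \<noteq> 0"
    using assms(4) unfolding decode_dist_def w_def z_def by simp
  then obtain j where j: "j < length Nv" "w ! j \<noteq> z ! j" "flip_candidate C0 Nv x = Nv ! j"
    using first_diff_nth[OF w_len] unfolding flip_candidate_def w_def z_def by blast
  then have "w \<noteq> map y Nv" using correct unfolding z_def by auto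
  then have "d0 \<le> hdist_list w (map y Nv)"
    using assms(2) w_in y_local unfolding min_distance_def by blast
  also have "\<dots> \<le> hdist_list w z + hdist_list z (map y Nv)"
    by (rule hdist_list_triangle) (simp_all add: w_len z_def)
  also have "hdist_list w z = decode_dist C0 Nv x"
    unfolding decode_dist_def w_def z_def ..
  finally show ?thesis using assms(5) unfolding z_def by linarith
qed

lemma card_above_threshold_mult_le_sum:
  fixes f :: "'a \<Rightarrow> real"
  assumes "finite A" "\<And>a. a \<in> A \<Longrightarrow> 0 \<le> f a"
  shows "real (card {a \<in> A. t < f a}) * t \<le> sum f A"
proof -
  have "real (card {a \<in> A. t < f a}) * t = (\<Sum>a \<in> {a \<in> A. t < f a}. t)" by simp
  also have "\<dots> \<le> (\<Sum>a \<in> {a \<in> A. t < f a}. f a)" by (rule sum_mono) simp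
  also have "\<dots> \<le> sum f A" using assms by (intro sum_mono2) auto
  finally show ?thesis .
qed

lemma sum_local_hdist:
  assumes "cd_regular n R N c d"
  shows "(\<Sum>v\<in>R. hdist_list (map x (N v)) (map y (N v))) = c * hdist n x y"
proof -
  define F where "F = {i \<in> {..<n}. x i \<noteq> y i}"
  have fin: "finite R" "finite F" using assms unfolding cd_regular_def F_def by auto
  have "(\<Sum>v\<in>R. hdist_list (map x (N v)) (map y (N v)))
      = (\<Sum>v\<in>R. \<Sum>i\<in>F. of_bool (i \<in> set (N v)))"
  proof (rule sum.cong)
    fix v assume "v \<in> R"
    then have "distinct (N v)" "set (N v) \<subseteq> {..<n}"
      using assms unfolding cd_regular_def by auto
    moreover have "{i \<in> set (N v). x i \<noteq> y i} = F \<inter> {i. i \<in> set (N v)}"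
      using \<open>set (N v) \<subseteq> {..<n}\<close> unfolding F_def by auto
    ultimately show "hdist_list (map x (N v)) (map y (N v)) = (\<Sum>i\<in>F. of_bool (i \<in> set (N v)))"
      using fin(2) by (simp add: hdist_list_map)
  qed simp
  also have "\<dots> = (\<Sum>i\<in>F. \<Sum>v\<in>R. of_bool (i \<in> set (N v)))"
    by (rule sum.swap)
  also have "\<dots> = (\<Sum>i\<in>F. c)"
  proof (rule sum.cong)
    fix i assume "i \<in> F"
    then have "card {v \<in> R. i \<in> set (N v)} = c"
      using assms unfolding cd_regular_def F_def by auto
    moreover have "R \<inter> {v. i \<in> set (N v)} = {v \<in> R. i \<in> set (N v)}" by auto
    ultimately show "(\<Sum>v\<in>R. of_bool (i \<in> set (N v))) = c" using fin(1) by simp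
  qed simp
  finally show ?thesis unfolding hdist_def F_def by simp
qed

lemma card_nominated_correct_le:
  assumes regular: "cd_regular n R N c d"
    and code_len: "C0 \<subseteq> {w. length w = d}"
    and "min_distance C0 d0"
    and "y \<in> tanner R N C0"
  shows "real (card {i \<in> {..<n} - {i \<in> {..<n}. x i \<noteq> y i}. 0 < rf_prob R N C0 d0 c x i})
           * (real d0 / 2) \<le> real c * real (hdist n x y)"
proof -
  let ?I = "{i \<in> {..<n} - {i \<in> {..<n}. x i \<noteq> y i}. 0 < rf_prob R N C0 d0 c x i}"
  let ?e = "\<lambda>v. real (hdist_list (map x (N v)) (map y (N v)))"
  define V where "V = {v \<in> R. real d0 / 2 < ?e v}"
  have finR: "finite R" using regular unfolding cd_regular_def by simp
  have "?I \<subseteq> (\<lambda>v. flip_candidate C0 (N v) x) ` V"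
  proof
    fix i assume i: "i \<in> ?I"
    then obtain v where v: "v \<in> R" "1 \<le> decode_dist C0 (N v) x"
        "real (decode_dist C0 (N v) x) < real d0 / 2" "flip_candidate C0 (N v) x = i"
      using rf_prob_pos_imp_nominated by blast
    have "real d0 / 2 < ?e v"
    proof (rule nominated_correct_imp_many_errors)
      show "C0 \<subseteq> {w. length w = length (N v)}"
        using code_len regular v(1) unfolding cd_regular_def by auto
      show "map y (N v) \<in> C0" using assms(4) v(1) unfolding tanner_def by blast
    qed (use assms(3) v i in auto)
    then show "i \<in> (\<lambda>v. flip_candidate C0 (N v) x) ` V"
      using v unfolding V_def by auto
  qed
  then have "card ?I \<le> card ((\<lambda>v. flip_candidate C0 (N v) x) ` V)"
    using finR unfolding V_def by (intro card_mono) auto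
  also have "\<dots> \<le> card V"
    using finR unfolding V_def by (intro card_image_le) simp
  finally have "card ?I \<le> card V" .
  then have "real (card ?I) * (real d0 / 2) \<le> real (card V) * (real d0 / 2)"
    by (simp add: mult_right_mono)
  also have "\<dots> \<le> (\<Sum>v\<in>R. ?e v)"
    unfolding V_def by (rule card_above_threshold_mult_le_sum[OF finR]) simp
  also have "\<dots> = real c * real (hdist n x y)"
    using sum_local_hdist[OF regular, of x y] by (metis of_nat_mult of_nat_sum)
  finally show ?thesis .
qed

lemma set_pmf_bernoulli_nonpos:
  assumes "p \<le> 0"
  shows "set_pmf (bernoulli_pmf p) \<subseteq> {False}"
proof -
  interpret pmf_as_function \<comment> \<open>the lifting setup in which bernoulli_pmf is defined\<close> .
  have "pmf (bernoulli_pmf p) True = 0" using assms by transfer auto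
  then show ?thesis by (auto simp: set_pmf_eq)
qed

lemma randflip_changed_imp_rf_prob_pos:
  assumes "x' \<in> set_pmf (randflip n R N C0 d0 c x)" "i < n" "x' i \<noteq> x i"
  shows "0 < rf_prob R N C0 d0 c x i"
proof (rule ccontr)
  assume "\<not> ?thesis"
  then have "set_pmf (bernoulli_pmf (rf_prob R N C0 d0 c x i)) \<subseteq> {False}"
    by (intro set_pmf_bernoulli_nonpos) simp
  with assms show False
    unfolding randflip_def by (auto simp: set_Pi_pmf PiE_dflt_def)
qed

lemma hdist_randflip_le:
  assumes "x' \<in> set_pmf (randflip n R N C0 d0 c x)"
  shows "hdist n x' y \<le> hdist n x y
    + card {i \<in> {..<n} - {i \<in> {..<n}. x i \<noteq> y i}. 0 < rf_prob R N C0 d0 c x i}"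
proof -
  let ?F = "{i \<in> {..<n}. x i \<noteq> y i}"
  let ?I = "{i \<in> {..<n} - ?F. 0 < rf_prob R N C0 d0 c x i}"
  have "{i \<in> {..<n}. x' i \<noteq> y i} \<subseteq> ?F \<union> ?I"
    using randflip_changed_imp_rf_prob_pos[OF assms] by auto
  then have "hdist n x' y \<le> card (?F \<union> ?I)"
    unfolding hdist_def by (intro card_mono) auto
  also have "\<dots> \<le> card ?F + card ?I" by (rule card_Un_le)
  finally show ?thesis unfolding hdist_def .
qed

theorem lemma3p4:
  fixes n c d d0 :: nat and R :: "'r set" and N :: "'r \<Rightarrow> nat list"
    and C0 :: "bool list set" and x y :: "nat \<Rightarrow> bool"
  assumes "cd_regular n R N c d"
    and "linear_code d C0"
    and "min_distance C0 d0"
    and "y \<in> tanner R N C0"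
  shows "real (card {i \<in> {..<n} - {i \<in> {..<n}. x i \<noteq> y i}. rf_prob R N C0 d0 c x i > 0})
           \<le> real c / (real d0 / 2) * real (card {i \<in> {..<n}. x i \<noteq> y i})
       \<and> (\<forall>x' \<in> set_pmf (randflip n R N C0 d0 c x).
           real (hdist n x' y) \<le> (1 + real c / (real d0 / 2)) * real (hdist n x y))"
proof -
  let ?I = "{i \<in> {..<n} - {i \<in> {..<n}. x i \<noteq> y i}. 0 < rf_prob R N C0 d0 c x i}"
  have code_len: "C0 \<subseteq> {w. length w = d}"
    using assms(2) unfolding linear_code_def by blast
  have "0 < d0" using min_distance_pos[OF code_len assms(3)] .
  moreover have "real (card ?I) * (real d0 / 2) \<le> real c * real (hdist n x y)"
    using card_nominated_correct_le[OF assms(1) code_len assms(3,4)] .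
  ultimately have nominated: "real (card ?I) \<le> real c / (real d0 / 2) * real (hdist n x y)"
    by (simp add: field_simps)
  have "real (hdist n x' y) \<le> (1 + real c / (real d0 / 2)) * real (hdist n x y)"
    if "x' \<in> set_pmf (randflip n R N C0 d0 c x)" for x'
    using hdist_randflip_le[OF that, of y] nominated by (simp add: algebra_simps)
  with nominated show ?thesis unfolding hdist_def by blast
qed

end
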